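(* Let $A$ be a real upper-triangular $d\times d$ matrix with real nonzero eigenvalues. If $A$ is invertible and $\lambda_i(A)\neq\lambda_{i'}(A)$ for all $i\neq i'$, then $T_A=P_{\rm low}(1\otimes A^T-A\otimes1)P_{\rm low}^T$ is invertible.
   Context: $\otimes$ is the Kronecker product, $1$ the identity. $P_{\rm low}\in\{0,1\}^{\frac{d(d-1)}2\times d^2}$ has as rows the standard basis row vectors of $\mathbb R^{d^2}$ selecting (in increasing order) the entries of the column-wise vectorization ${\rm vec}(B)$ corresponding to strictly lower-triangular entries ($i>j$) of $B$. *)

theory Defs
  imports "Jordan_Normal_Form.Matrix"
begin

definition kron_mat :: "'a::times mat \<Rightarrow> 'a mat \<Rightarrow> 'a mat" where
  "kron_mat A B = mat (dim_row A * dim_row B) (dim_col A * dim_col B)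
     (\<lambda>(i,j). A $$ (i div dim_row B, j div dim_col B) * B $$ (i mod dim_row B, j mod dim_col B))"

text \<open>Column-wise vectorization: entry k of vec(B) is B(k mod d, k div d).
  low_idx d lists, in increasing order, the positions k < d*d of vec(B)
  corresponding to strictly lower-triangular entries (row > column).\<close>
definition low_idx :: "nat \<Rightarrow> nat list" where
  "low_idx d = filter (\<lambda>k. k mod d > k div d) [0..<d*d]"

definition P_low :: "nat \<Rightarrow> real mat" where
  "P_low d = mat (length (low_idx d)) (d*d)
     (\<lambda>(r,k). if k = low_idx d ! r then 1 else 0)"

definition T_mat :: "real mat \<Rightarrow> real mat" where
  "T_mat A = (let d = dim_row A in
     P_low d * (kron_mat (1\<^sub>m d) (transpose_mat A) - kron_mat A (1\<^sub>m d)) * transpose_mat (P_low d))"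

end

theory Submission
  imports Defs "Jordan_Normal_Form.Determinant"
begin

text \<open>
  Index the position k of vec(B) by the entry (k mod d, k div d) and give it the weight
  (k mod d) - (k div d), the distance below the diagonal. For upper-triangular A, every
  off-diagonal entry of 1 \<otimes> A^T - A \<otimes> 1 moves strictly down in weight, so after
  restricting to the strictly lower-triangular positions, T_A is triangular with respect to
  an ordering by weight. Its diagonal entries are the differences A(i,i) - A(j,j) with i > j,
  which are nonzero because the eigenvalues are distinct.
\<close>

lemma invertible_mat_if_det_nonzero:
  fixes A :: "'a::field mat"
  assumes A: "A \<in> carrier_mat n n" and det: "det A \<noteq> 0"
  shows "invertible_mat A"
proof -
  have "A \<in> Units (ring_mat TYPE('a) n undefined)"
    by (rule det_non_zero_imp_unit[OF A det])
  then obtain B where "B \<in> carrier_mat n n" "B * A = 1\<^sub>m n" "A * B = 1\<^sub>m n"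
    unfolding Units_def ring_mat_def by auto
  then show ?thesis
    using A unfolding invertible_mat_def inverts_mat_def by auto
qed

lemma mult_mat_vec_eq_zero_if_weight_triangular:
  fixes T :: "'a::field mat" and w :: "nat \<Rightarrow> 'b::linorder"
  assumes T: "T \<in> carrier_mat n n"
    and diag: "\<And>a. a < n \<Longrightarrow> T $$ (a,a) \<noteq> 0"
    and triangular: "\<And>a b. a < n \<Longrightarrow> b < n \<Longrightarrow> a \<noteq> b \<Longrightarrow> T $$ (a,b) \<noteq> 0 \<Longrightarrow> w b < w a"
    and v: "v \<in> carrier_vec n" and kernel: "T *\<^sub>v v = 0\<^sub>v n"
  shows "v = 0\<^sub>v n"
proof (rule ccontr)
  assume "v \<noteq> 0\<^sub>v n"
  define S where "S = {a. a < n \<and> v $ a \<noteq> 0}"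
  have "S \<noteq> {}" "finite S"
    using \<open>v \<noteq> 0\<^sub>v n\<close> v unfolding S_def by (auto simp: vec_eq_iff)
  define a where "a = arg_min_on w S"
  have "a \<in> S" and minimal: "\<And>b. b \<in> S \<Longrightarrow> \<not> w b < w a"
    using arg_min_if_finite[OF \<open>finite S\<close> \<open>S \<noteq> {}\<close>] unfolding a_def by auto
  then have a: "a < n" "v $ a \<noteq> 0" unfolding S_def by auto
  \<comment> \<open>By minimality of w a on the support of v, only the diagonal term survives in row a.\<close>
  have "(\<Sum>b<n. T $$ (a,b) * v $ b) = (\<Sum>b\<in>{a}. T $$ (a,b) * v $ b)"
  proof (rule sum.mono_neutral_right)
    show "\<forall>b\<in>{..<n} - {a}. T $$ (a,b) * v $ b = 0"
      using triangular minimal a unfolding S_def by fastforce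
  qed (use a in auto)
  then have "(T *\<^sub>v v) $ a = T $$ (a,a) * v $ a"
    using T v a by (simp add: scalar_prod_def atLeast0LessThan)
  with kernel a diag show False by simp
qed

lemma invertible_mat_if_weight_triangular:
  fixes T :: "'a::field mat" and w :: "nat \<Rightarrow> 'b::linorder"
  assumes T: "T \<in> carrier_mat n n"
    and diag: "\<And>a. a < n \<Longrightarrow> T $$ (a,a) \<noteq> 0"
    and triangular: "\<And>a b. a < n \<Longrightarrow> b < n \<Longrightarrow> a \<noteq> b \<Longrightarrow> T $$ (a,b) \<noteq> 0 \<Longrightarrow> w b < w a"
  shows "invertible_mat T"
proof (rule invertible_mat_if_det_nonzero[OF T])
  have "v = 0\<^sub>v n" if "v \<in> carrier_vec n" "T *\<^sub>v v = 0\<^sub>v n" for v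
    using mult_mat_vec_eq_zero_if_weight_triangular[of T n, OF T diag triangular that] .
  then show "det T \<noteq> 0"
    using det_0_iff_vec_prod_zero[OF T] by blast
qed

definition selection_mat :: "nat \<Rightarrow> nat list \<Rightarrow> 'a::{zero,one} mat" where
  "selection_mat n ks = mat (length ks) n (\<lambda>(r,k). if k = ks ! r then 1 else 0)"

lemma selection_mat_carrier: "selection_mat n ks \<in> carrier_mat (length ks) n"
  unfolding selection_mat_def by simp

lemma selection_mat_mult_index:
  fixes B :: "'a::semiring_1 mat"
  assumes B: "B \<in> carrier_mat n m" and a: "a < length ks" and j: "j < m" and ks: "ks ! a < n"
  shows "(selection_mat n ks * B) $$ (a,j) = B $$ (ks ! a, j)"
proof -
  have "(selection_mat n ks * B) $$ (a,j) = (\<Sum>k<n. selection_mat n ks $$ (a,k) * B $$ (k,j))"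
    using B a j by (simp add: selection_mat_def scalar_prod_def atLeast0LessThan)
  also have "\<dots> = (\<Sum>k<n. if k = ks ! a then B $$ (k,j) else 0)"
    using a by (intro sum.cong) (auto simp: selection_mat_def)
  finally show ?thesis
    using ks by simp
qed

lemma selection_mat_conj_index:
  fixes B :: "'a::comm_semiring_1 mat"
  assumes B: "B \<in> carrier_mat n n" and ks: "\<forall>k\<in>set ks. k < n"
    and a: "a < length ks" and b: "b < length ks"
  shows "(selection_mat n ks * B * transpose_mat (selection_mat n ks)) $$ (a,b) = B $$ (ks ! a, ks ! b)"
proof -
  let ?S = "selection_mat n ks"
  have SB: "?S * B \<in> carrier_mat (length ks) n"
    using B selection_mat_carrier[of n ks] by (metis mult_carrier_mat)
  have ks_ab: "ks ! a < n" "ks ! b < n"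
    using a b ks by auto
  have "?S * B * transpose_mat ?S = transpose_mat (?S * transpose_mat (?S * B))"
    using B selection_mat_carrier[of n ks]
    by (metis mult_carrier_mat transpose_mult transpose_carrier_mat transpose_transpose)
  also have "\<dots> $$ (a,b) = (?S * transpose_mat (?S * B)) $$ (b,a)"
    using a b SB by (simp add: selection_mat_def)
  also have "\<dots> = transpose_mat (?S * B) $$ (ks ! b, a)"
    using SB a b ks_ab by (intro selection_mat_mult_index) auto
  also have "\<dots> = (?S * B) $$ (a, ks ! b)"
    using SB a ks_ab by (metis carrier_matD index_transpose_mat(1))
  also have "\<dots> = B $$ (ks ! a, ks ! b)"
    by (rule selection_mat_mult_index[OF B a ks_ab(2) ks_ab(1)])
  finally show ?thesis .
qed

lemma P_low_eq_selection_mat: "P_low d = selection_mat (d*d) (low_idx d)"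
  unfolding P_low_def selection_mat_def ..

text \<open>The matrix of X \<mapsto> A^T X - X A^T acting on column-wise vectorizations.\<close>
definition commutator_mat :: "'a::ring_1 mat \<Rightarrow> 'a mat" where
  "commutator_mat A = kron_mat (1\<^sub>m (dim_row A)) (transpose_mat A) - kron_mat A (1\<^sub>m (dim_row A))"

lemma commutator_mat_carrier:
  "A \<in> carrier_mat d d \<Longrightarrow> commutator_mat A \<in> carrier_mat (d*d) (d*d)"
  unfolding commutator_mat_def kron_mat_def by auto

lemma commutator_mat_index:
  fixes A :: "'a::ring_1 mat"
  assumes A: "A \<in> carrier_mat d d" and k: "k < d*d" and l: "l < d*d"
  shows "commutator_mat A $$ (k,l)
     = (if k div d = l div d then A $$ (l mod d, k mod d) else 0)
       - (if k mod d = l mod d then A $$ (k div d, l div d) else 0)"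
proof -
  have "d > 0" using k by (cases d) auto
  then have "k div d < d" "k mod d < d" "l div d < d" "l mod d < d"
    using k l by (auto simp: less_mult_imp_div_less)
  then show ?thesis
    using A k l unfolding commutator_mat_def kron_mat_def by auto
qed

lemma commutator_mat_diag_nonzero:
  fixes A :: "'a::ring_1 mat"
  assumes A: "A \<in> carrier_mat d d" and k: "k < d*d" and off_diag: "k div d \<noteq> k mod d"
    and distinct_diag: "\<forall>i<d. \<forall>i'<d. i \<noteq> i' \<longrightarrow> A $$ (i,i) \<noteq> A $$ (i',i')"
  shows "commutator_mat A $$ (k,k) \<noteq> 0"
proof -
  have "d > 0" using k by (cases d) auto
  then have "k div d < d" "k mod d < d"
    using k by (auto simp: less_mult_imp_div_less)
  then show ?thesis
    using commutator_mat_index[OF A k k] off_diag distinct_diag by auto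
qed

lemma commutator_mat_weight_decreasing:
  fixes A :: "'a::ring_1 mat"
  assumes A: "A \<in> carrier_mat d d" and ut: "upper_triangular A"
    and k: "k < d*d" and l: "l < d*d" and "k \<noteq> l"
    and nz: "commutator_mat A $$ (k,l) \<noteq> 0"
  shows "int (l mod d) - int (l div d) < int (k mod d) - int (k div d)"
proof -
  have "d > 0" using k by (cases d) auto
  then have "k div d < d" "l mod d < d"
    using k l by (auto simp: less_mult_imp_div_less)
  have below_diag: "A $$ (i,j) = 0" if "j < i" "i < d" for i j
    using ut that A by auto
  have "k div d \<noteq> l div d \<or> k mod d \<noteq> l mod d"
    using \<open>k \<noteq> l\<close> by (metis div_mult_mod_eq)
  then consider "k div d = l div d" "k mod d \<noteq> l mod d" "A $$ (l mod d, k mod d) \<noteq> 0"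
    | "k div d \<noteq> l div d" "k mod d = l mod d" "A $$ (k div d, l div d) \<noteq> 0"
    using nz commutator_mat_index[OF A k l] by (auto split: if_splits)
  then show ?thesis
  proof cases
    case 1
    then have "\<not> k mod d < l mod d" using below_diag \<open>l mod d < d\<close> by auto
    with 1 show ?thesis by linarith
  next
    case 2
    then have "\<not> l div d < k div d" using below_diag \<open>k div d < d\<close> by auto
    with 2 show ?thesis by linarith
  qed
qed

lemma low_idx_nth:
  assumes "a < length (low_idx d)"
  shows "low_idx d ! a < d*d" "low_idx d ! a div d < low_idx d ! a mod d"
proof -
  have "low_idx d ! a \<in> set (low_idx d)" using assms by simp
  then show "low_idx d ! a < d*d" "low_idx d ! a div d < low_idx d ! a mod d"
    unfolding low_idx_def by auto
qed

lemma distinct_low_idx: "distinct (low_idx d)"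
  unfolding low_idx_def by simp

lemma T_mat_eq_selection_conj:
  assumes "A \<in> carrier_mat d d"
  shows "T_mat A = selection_mat (d*d) (low_idx d) * commutator_mat A
      * transpose_mat (selection_mat (d*d) (low_idx d))"
  using assms unfolding T_mat_def commutator_mat_def P_low_eq_selection_mat Let_def by simp

lemma T_mat_carrier:
  assumes "A \<in> carrier_mat d d"
  shows "T_mat A \<in> carrier_mat (length (low_idx d)) (length (low_idx d))"
  unfolding T_mat_eq_selection_conj[OF assms]
  using selection_mat_carrier commutator_mat_carrier[OF assms] by fastforce

lemma T_mat_index:
  assumes A: "A \<in> carrier_mat d d" and a: "a < length (low_idx d)" and b: "b < length (low_idx d)"
  shows "T_mat A $$ (a,b) = commutator_mat A $$ (low_idx d ! a, low_idx d ! b)"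
proof -
  have "\<forall>k\<in>set (low_idx d). k < d*d"
    using low_idx_nth(1) by (metis in_set_conv_nth)
  then show ?thesis
    unfolding T_mat_eq_selection_conj[OF A]
    using selection_mat_conj_index[OF commutator_mat_carrier[OF A]] a b by simp
qed

theorem lemma8:
  fixes A :: "real mat" and d :: nat
  assumes "A \<in> carrier_mat d d"
    and "upper_triangular A"
    and "\<forall>i<d. A $$ (i,i) \<noteq> 0"
    and "invertible_mat A"
    and "\<forall>i<d. \<forall>i'<d. i \<noteq> i' \<longrightarrow> A $$ (i,i) \<noteq> A $$ (i',i')"
  shows "invertible_mat (T_mat A)"
proof -
  note A = assms(1)
  let ?L = "low_idx d"
  show ?thesis
  proof (rule invertible_mat_if_weight_triangular[OF T_mat_carrier[OF A],
        where w = "\<lambda>a. int (?L ! a mod d) - int (?L ! a div d)"])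
    fix a assume "a < length ?L"
    then show "T_mat A $$ (a,a) \<noteq> 0"
      using T_mat_index[OF A] commutator_mat_diag_nonzero[OF A low_idx_nth(1) _ assms(5)] low_idx_nth(2)
      by (metis less_irrefl)
  next
    fix a b assume "a < length ?L" "b < length ?L" "a \<noteq> b" "T_mat A $$ (a,b) \<noteq> 0"
    then show "int (?L ! b mod d) - int (?L ! b div d) < int (?L ! a mod d) - int (?L ! a div d)"
      using commutator_mat_weight_decreasing[OF A assms(2) low_idx_nth(1) low_idx_nth(1)] T_mat_index[OF A]
        distinct_low_idx by (simp add: nth_eq_iff_index_eq)
  qed
qed

end
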